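(* Let $R$, $Q_R$ be as in the context, let $q=a+v\in Q_R$ and $z:=a+i|v|\in R$. Then $$L_q(t)=\mathrm{Re}\,L_z(t)+\frac{v}{|v|}\,\mathrm{Im}\,L_z(t),\qquad t\in\mathbb{R}.$$
   Context: $\mathbb{H}_\mathbb{R}$ denotes the real quaternions $a+v_1e_1+v_2e_2+v_3e_3$ with $e_1^2=e_2^2=e_3^2=-1$, $e_1e_2=e_3$, $e_2e_3=e_1$, $e_3e_1=e_2$; $\mathbb{H}_\mathbb{C}$ the complex quaternions (complex coefficients, $i$ commuting with every $e_j$). For $q=a+v$, $v=\sum v_je_j$, $|v|=(\sum v_j^2)^{1/2}$. Quaternionic power: for $\zeta\in\mathbb{C}\setminus\{0\}$, $\zeta^q:=\zeta^a[\cos(|v|\log\zeta)+\frac{v}{|v|}\sin(|v|\log\zeta)]$ (principal $\log$). $\Xi(\xi):=\frac{1-e^{-i\xi}}{i\xi}$, $\Xi(0):=1$. $\widehat{B_q}:=\Xi^q$ (quaternionic power) and, for $w\in\mathbb{C}$ with $\mathrm{Re}\,w>1$, $\widehat{B_w}:=e^{w\log\Xi}$; $B_q,B_w$ are the inverse Fourier transforms ($\hat f(\xi)=\int f(x)e^{-i\xi x}dx$). Classical Hurwitz zeta: $\zeta(s,a)=\sum_{k\ge0}(a+k)^{-s}$. Standing assumption: $R\subset\{w\in\mathbb{C}:\mathrm{Re}\,w>1\}$ with $\overline R=R$ and $\zeta(w,\alpha)+e^{-i\pi w}\zeta(w,1-\alpha)\ne0$ for all $w\in R$, $\alpha\in(0,1)$;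 $Q_R:=\{q=a+v\in\mathbb{H}_\mathbb{R}: v\ne0,\ a+i|v|\in R\}$. For $q\in Q_R$ the quaternionic fundamental cardinal spline is $L_q(x):=\frac1{2\pi}\int\widehat{B_q}(\xi)\big(\sum_k\widehat{B_q}(\xi+2\pi k)\big)^{-1}e^{i\xi x}d\xi$; for $z\in R$ the complex fundamental cardinal spline is $L_z(x):=\frac1{2\pi}\int\widehat{B_z}(\xi)\big(\sum_k\widehat{B_z}(\xi+2\pi k)\big)^{-1}e^{i\xi x}d\xi$ (denominators nonvanishing/invertible); equivalently $L_z=\sum_jw_jB_z(\cdot-j)$ where $\sum_jB_z(m-j)w_j=\delta_{m,0}$, $m\in\mathbb{Z}$. *)

theory Defs
  imports "HOL-Analysis.Analysis"
begin

datatype rquat = RQuat (rq0: real) (rq1: real) (rq2: real) (rq3: real)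

text \<open>Complex quaternions a + v1 e1 + v2 e2 + v3 e3 with complex coefficients
  (the imaginary unit i commutes with every e_j).\<close>
datatype cquat = CQuat (cq0: complex) (cq1: complex) (cq2: complex) (cq3: complex)

text \<open>Hamilton product, e1 e2 = e3, e2 e3 = e1, e3 e1 = e2, ej^2 = -1.\<close>
definition cq_mult :: "cquat \<Rightarrow> cquat \<Rightarrow> cquat" where
  "cq_mult p q = CQuat
     (cq0 p * cq0 q - cq1 p * cq1 q - cq2 p * cq2 q - cq3 p * cq3 q)
     (cq0 p * cq1 q + cq1 p * cq0 q + cq2 p * cq3 q - cq3 p * cq2 q)
     (cq0 p * cq2 q - cq1 p * cq3 q + cq2 p * cq0 q + cq3 p * cq1 q)
     (cq0 p * cq3 q + cq1 p * cq2 q - cq2 p * cq1 q + cq3 p * cq0 q)"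

text \<open>Multiplicative inverse in the complex quaternions: conj(q)/N(q) with
  N(q) = q0^2+q1^2+q2^2+q3^2 (q is invertible iff N(q) is nonzero).\<close>
definition cq_inverse :: "cquat \<Rightarrow> cquat" where
  "cq_inverse q = (let N = cq0 q ^ 2 + cq1 q ^ 2 + cq2 q ^ 2 + cq3 q ^ 2 in
     CQuat (cq0 q / N) (- cq1 q / N) (- cq2 q / N) (- cq3 q / N))"

definition cq_scale :: "complex \<Rightarrow> cquat \<Rightarrow> cquat" where
  "cq_scale c q = CQuat (c * cq0 q) (c * cq1 q) (c * cq2 q) (c * cq3 q)"

definition rq_to_cq :: "rquat \<Rightarrow> cquat" where
  "rq_to_cq q = CQuat (of_real (rq0 q)) (of_real (rq1 q)) (of_real (rq2 q)) (of_real (rq3 q))"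

definition vnorm :: "rquat \<Rightarrow> real" where
  "vnorm q = sqrt (rq1 q ^ 2 + rq2 q ^ 2 + rq3 q ^ 2)"

definition cq_infsum_int :: "(int \<Rightarrow> cquat) \<Rightarrow> cquat" where
  "cq_infsum_int f = CQuat (\<Sum>\<^sub>\<infinity>k\<in>UNIV. cq0 (f k)) (\<Sum>\<^sub>\<infinity>k\<in>UNIV. cq1 (f k))
                          (\<Sum>\<^sub>\<infinity>k\<in>UNIV. cq2 (f k)) (\<Sum>\<^sub>\<infinity>k\<in>UNIV. cq3 (f k))"

definition cq_integral :: "(real \<Rightarrow> cquat) \<Rightarrow> cquat" where
  "cq_integral f = CQuat (LINT x|lborel. cq0 (f x)) (LINT x|lborel. cq1 (f x))
                        (LINT x|lborel. cq2 (f x)) (LINT x|lborel. cq3 (f x))"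

text \<open>zeta^q = zeta^a [cos(|v| log zeta) + v/|v| sin(|v| log zeta)] with principal log
  (Isabelle's Ln / powr are principal). Convention: 0^q = 0.\<close>
definition qpow :: "complex \<Rightarrow> rquat \<Rightarrow> cquat" where
  "qpow \<zeta> q = (if \<zeta> = 0 then CQuat 0 0 0 0 else
     (let A = \<zeta> powr complex_of_real (rq0 q);
          C = cos (complex_of_real (vnorm q) * Ln \<zeta>);
          S = sin (complex_of_real (vnorm q) * Ln \<zeta>) in
      CQuat (A * C) (A * of_real (rq1 q / vnorm q) * S)
            (A * of_real (rq2 q / vnorm q) * S) (A * of_real (rq3 q / vnorm q) * S)))"

definition Xi :: "real \<Rightarrow> complex" where
  "Xi \<xi> = (if \<xi> = 0 then 1 else (1 - exp (- \<i> * of_real \<xi>)) / (\<i> * of_real \<xi>))"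

definition hatB_quat :: "rquat \<Rightarrow> real \<Rightarrow> cquat" where
  "hatB_quat q \<xi> = qpow (Xi \<xi>) q"

text \<open>e^{w log Xi}; at zeros of Xi (Re w > 1) the value is 0 (Isabelle's powr convention).\<close>
definition hatB_cplx :: "complex \<Rightarrow> real \<Rightarrow> complex" where
  "hatB_cplx w \<xi> = Xi \<xi> powr w"

definition L_quat :: "rquat \<Rightarrow> real \<Rightarrow> cquat" where
  "L_quat q x = cq_integral (\<lambda>\<xi>. cq_scale (exp (\<i> * of_real (\<xi> * x)) / (2 * of_real pi))
      (cq_mult (hatB_quat q \<xi>)
               (cq_inverse (cq_infsum_int (\<lambda>k. hatB_quat q (\<xi> + 2 * pi * of_int k))))))"

definition L_cplx :: "complex \<Rightarrow> real \<Rightarrow> complex" where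
  "L_cplx z x = (1 / (2 * of_real pi)) * (LINT \<xi>|lborel.
      hatB_cplx z \<xi> / (\<Sum>\<^sub>\<infinity>k\<in>(UNIV::int set). hatB_cplx z (\<xi> + 2 * pi * of_int k))
      * exp (\<i> * of_real (\<xi> * x)))"

definition hurwitz_zeta :: "complex \<Rightarrow> real \<Rightarrow> complex" where
  "hurwitz_zeta s a = (\<Sum>k. complex_of_real (a + real k) powr (- s))"

definition admissible_R :: "complex set \<Rightarrow> bool" where
  "admissible_R R \<longleftrightarrow> R \<subseteq> {w. Re w > 1} \<and> cnj ` R = R \<and>
     (\<forall>w\<in>R. \<forall>\<alpha>\<in>{0<..<1}. hurwitz_zeta w \<alpha> + exp (- \<i> * of_real pi * w) * hurwitz_zeta w (1 - \<alpha>) \<noteq> 0)"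

definition Q_set :: "complex set \<Rightarrow> rquat set" where
  "Q_set R = {q. (rq1 q, rq2 q, rq3 q) \<noteq> (0, 0, 0) \<and>
                 Complex (rq0 q) (vnorm q) \<in> R}"

end

theory Submission
  imports Defs "HOL-Library.Nat_Bijection"
begin

text \<open>Write \<open>q = a + v\<close>, \<open>u = v/|v|\<close>, \<open>z = a + i|v|\<close> and \<open>w = cnj z\<close>. Since \<open>u\<^sup>2 = -1\<close>, the
  elements \<open>(1 \<mp> i u)/2\<close> are orthogonal idempotents, so \<open>(\<alpha>, \<beta>) \<mapsto> \<alpha> (1 - i u)/2 + \<beta> (1 + i u)/2\<close>
  embeds the algebra \<open>\<complex> \<times> \<complex>\<close> into the complex quaternions. Under this embedding \<open>\<zeta>\<^sup>q\<close>
  corresponds to \<open>(\<zeta>\<^sup>z, \<zeta>\<^sup>w)\<close>, and sums, inverses and integrals are taken componentwise, so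
  \<open>L\<^sub>q\<close> corresponds to \<open>(L\<^sub>z, L\<^sub>w)\<close>; finally \<open>L\<^sub>w = cnj L\<^sub>z\<close> because \<open>\<Xi>(-\<xi>) = cnj \<Xi>(\<xi>)\<close>.
  The analytic input is the integrability of the integrand of \<open>L\<^sub>z\<close>: the periodization of
  \<open>B\<^sub>z\<close> is continuous and \<open>2\<pi>\<close>-periodic, and on \<open>(0, 2\<pi>)\<close> it is a nonzero factor times
  \<open>\<zeta>(z,\<alpha>) + e\<^sup>i\<^sup>\<pi>\<^sup>z \<zeta>(z,1-\<alpha>)\<close>, which the standing assumption for \<open>w\<close> keeps away from zero.\<close>

lemma Xi_eq_Complex: "\<xi> \<noteq> 0 \<Longrightarrow> Xi \<xi> = Complex (sin \<xi> / \<xi>) ((cos \<xi> - 1) / \<xi>)"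
  by (simp add: Xi_def complex_eq_iff exp_minus_Euler field_simps cos_of_real sin_of_real
      Re_divide Im_divide power2_eq_square)

lemma Xi_0 [simp]: "Xi 0 = 1"
  by (simp add: Xi_def)

lemma Xi_uminus: "Xi (- \<xi>) = cnj (Xi \<xi>)"
  by (cases "\<xi> = 0") (simp_all add: Xi_eq_Complex complex_eq_iff divide_simps)

lemma Xi_real_imp_nonneg: "Im (Xi \<xi>) = 0 \<Longrightarrow> 0 \<le> Re (Xi \<xi>)"
proof (cases "\<xi> = 0")
  case False
  assume "Im (Xi \<xi>) = 0"
  hence "cos \<xi> = 1" using False by (simp add: Xi_eq_Complex)
  hence "sin \<xi> = 0" using sin_cos_squared_add[of \<xi>] by simp
  thus ?thesis using False by (simp add: Xi_eq_Complex)
qed simp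

lemma norm_one_minus_exp_le: "cmod (1 - exp (- \<i> * of_real x)) \<le> \<bar>x\<bar>"
proof -
  have "(cmod (1 - exp (- \<i> * of_real x)))\<^sup>2 = (1 - cos x)\<^sup>2 + (sin x)\<^sup>2"
    by (simp add: cmod_power2 exp_minus_Euler cos_of_real sin_of_real)
  also have "\<dots> = 4 * (sin (x/2))\<^sup>2"
    using cos_double_sin[of "x/2"] by (simp add: power2_eq_square algebra_simps sin_squared_eq)
  also have "\<dots> \<le> 4 * (x/2)\<^sup>2"
    using abs_sin_x_le_abs_x[of "x/2"] abs_le_square_iff[of "sin (x/2)" "x/2"] by simp
  also have "\<dots> = \<bar>x\<bar>\<^sup>2"
    by (simp add: power2_eq_square)
  finally show ?thesis
    by (metis abs_ge_zero norm_ge_zero power2_le_imp_le)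
qed

lemma norm_Xi_le: "cmod (Xi \<xi>) \<le> 4 / (\<bar>\<xi>\<bar> + 1)"
proof (cases "\<xi> = 0")
  case False
  have norm_Xi: "cmod (Xi \<xi>) = cmod (1 - exp (- \<i> * of_real \<xi>)) / \<bar>\<xi>\<bar>"
    using False by (simp add: Xi_def norm_divide norm_mult)
  have "cmod (1 - exp (- \<i> * of_real \<xi>)) \<le> cmod 1 + cmod (exp (- \<i> * of_real \<xi>))"
    by (rule norm_triangle_ineq4)
  hence le2: "cmod (1 - exp (- \<i> * of_real \<xi>)) \<le> 2"
    by (simp add: norm_exp_eq_Re)
  show ?thesis
  proof (cases "\<bar>\<xi>\<bar> \<le> 3")
    case True
    have "cmod (Xi \<xi>) \<le> 1"
      using norm_one_minus_exp_le[of \<xi>] False by (simp add: norm_Xi divide_simps)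
    moreover have "1 \<le> 4 / (\<bar>\<xi>\<bar> + 1)"
      using True by (auto simp: le_divide_eq_1)
    ultimately show ?thesis by linarith
  next
    case big: False
    have "cmod (Xi \<xi>) \<le> 2 / \<bar>\<xi>\<bar>"
      using le2 False by (simp add: norm_Xi divide_right_mono)
    also have "\<dots> \<le> 4 / (\<bar>\<xi>\<bar> + 1)"
      using big by (simp add: divide_simps)
    finally show ?thesis .
  qed
qed simp

lemma exp_minus_i_2pi_int: "exp (- \<i> * of_real (2 * pi * of_int k)) = 1"
proof -
  have "- \<i> * of_real (2 * pi * of_int k) = (2 * of_int (-k) * pi) * \<i>"
    by (simp add: algebra_simps)
  also have "exp \<dots> = 1"
    by (rule exp_integer_2pi) simp
  finally show ?thesis .
qed

lemma Xi_2pi_int: "k \<noteq> 0 \<Longrightarrow> Xi (2 * pi * of_int k) = 0"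
  using exp_minus_i_2pi_int[of k] by (simp add: Xi_def)

definition Xi_numer :: "real \<Rightarrow> complex" where
  "Xi_numer \<xi> = (1 - exp (- \<i> * of_real \<xi>)) / \<i>"

lemma Xi_numer_eq_Complex: "Xi_numer \<xi> = Complex (sin \<xi>) (cos \<xi> - 1)"
  by (simp add: Xi_numer_def complex_eq_iff exp_minus_Euler cos_of_real sin_of_real Re_divide Im_divide)

lemma Im_Xi_numer_neg:
  assumes "0 < \<xi>" "\<xi> < 2 * pi"
  shows "Im (Xi_numer \<xi>) < 0"
proof -
  have "cos \<xi> \<noteq> 1"
  proof
    assume "cos \<xi> = 1"
    then obtain n :: int where "\<xi> = n * 2 * pi" by (auto simp: cos_one_2pi_int)
    with assms have "0 < real_of_int n" "real_of_int n < 1"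
      by (auto simp: zero_less_mult_iff mult_less_cancel_right mult_ac)
    thus False by simp
  qed
  hence "cos \<xi> < 1"
    using cos_le_one[of \<xi>] by linarith
  thus ?thesis by (simp add: Xi_numer_eq_Complex)
qed

lemma Xi_shift_2pi_int:
  assumes "\<xi> + 2 * pi * of_int k \<noteq> 0"
  shows "Xi (\<xi> + 2 * pi * of_int k) = of_real (inverse (\<xi> + 2 * pi * of_int k)) * Xi_numer \<xi>"
proof -
  define r where "r = \<xi> + 2 * pi * of_int k"
  have "exp (- \<i> * of_real r) = exp (- \<i> * of_real \<xi>) * exp (- \<i> * of_real (2 * pi * of_int k))"
    by (simp add: r_def exp_add[symmetric] algebra_simps)
  hence "exp (- \<i> * of_real r) = exp (- \<i> * of_real \<xi>)"
    by (simp only: exp_minus_i_2pi_int mult_1_right)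
  moreover have r: "r \<noteq> 0"
    using assms by (simp add: r_def)
  ultimately have "Xi r = (1 - exp (- \<i> * of_real \<xi>)) / (\<i> * of_real r)"
    by (simp add: Xi_def)
  also have "\<dots> = of_real (inverse r) * Xi_numer \<xi>"
    using r by (simp add: Xi_numer_def field_simps)
  finally show ?thesis by (simp only: r_def)
qed

lemma isCont_Xi: "isCont Xi x"
proof (cases "x = 0")
  case True
  have "((\<lambda>y::real. (exp (- \<i> * of_real y) - 1) / (- \<i> * of_real y)) \<longlongrightarrow> 1) (at 0)"
    by (rule filterlim_compose[OF lim_exp_minus_1 filterlim_atI])
       (auto intro!: tendsto_eq_intros simp: eventually_at_filter)
  moreover have "\<forall>\<^sub>F y in at (0::real). (exp (- \<i> * of_real y) - 1) / (- \<i> * of_real y) = Xi y"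
    by (auto simp: eventually_at_filter Xi_def divide_simps algebra_simps)
  ultimately show ?thesis
    using True tendsto_cong by (fastforce simp: isCont_def)
next
  case False
  have "isCont (\<lambda>y. (1 - exp (- \<i> * of_real y)) / (\<i> * of_real y)) x"
    using False by (intro continuous_intros) auto
  moreover have "\<forall>\<^sub>F y in nhds x. (1 - exp (- \<i> * of_real y)) / (\<i> * of_real y) = Xi y"
    using t1_space_nhds[OF False] by (rule eventually_mono) (simp add: Xi_def)
  ultimately show ?thesis
    by (simp add: isCont_cong)
qed

lemma infsum_diff:
  fixes f g :: "'a \<Rightarrow> 'b :: {topological_ab_group_add, t2_space}"
  assumes "f summable_on A" "g summable_on A"
  shows "(\<Sum>\<^sub>\<infinity>x\<in>A. f x - g x) = infsum f A - infsum g A"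
  using infsum_add[OF assms(1) summable_on_uminus[THEN iffD2, OF assms(2)]] by (simp add: infsum_uminus)

lemma int_UNIV_split: "(UNIV :: int set) = range int \<union> range (\<lambda>n. - int n - 1)"
proof (rule set_eqI)
  fix k :: int
  show "k \<in> UNIV \<longleftrightarrow> k \<in> range int \<union> range (\<lambda>n. - int n - 1)"
  proof (cases "k \<ge> 0")
    case True
    hence "k = int (nat k)" by simp
    thus ?thesis by blast
  next
    case False
    hence "k = - int (nat (- k - 1)) - 1" by simp
    thus ?thesis by blast
  qed
qed

lemma has_sum_int_split:
  fixes f :: "int \<Rightarrow> 'a :: topological_comm_monoid_add"
  assumes "((\<lambda>n. f (int n)) has_sum a) UNIV" "((\<lambda>n. f (- int n - 1)) has_sum b) UNIV"
  shows "(f has_sum (a + b)) UNIV"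
proof -
  have "(f has_sum a) (range int)"
    using assms(1) by (subst has_sum_reindex) (auto simp: o_def)
  moreover have "(f has_sum b) (range (\<lambda>n. - int n - 1))"
    using assms(2) by (subst has_sum_reindex) (auto simp: o_def inj_on_def)
  ultimately have "(f has_sum (a + b)) (range int \<union> range (\<lambda>n. - int n - 1))"
    by (rule has_sum_Un_disjoint) auto
  thus ?thesis by (simp only: int_UNIV_split[symmetric])
qed

lemma summable_shifted_powr:
  fixes c s :: real
  assumes "1 \<le> c" "1 < s"
  shows "summable (\<lambda>n. (real n + c) powr (- s))"
proof -
  have "summable (\<lambda>n. real (Suc n) powr (- s))"
    using assms(2) by (subst summable_Suc_iff) (simp add: summable_real_powr_iff)
  thus ?thesis
    by (rule summable_comparison_test'[where N=0]) (use assms in \<open>auto intro!: powr_mono2'\<close>)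
qed

lemma summable_on_int_powr:
  fixes s :: real
  assumes "1 < s"
  shows "(\<lambda>k::int. (\<bar>of_int k\<bar> + 1) powr (- s)) summable_on UNIV"
proof -
  let ?f = "\<lambda>k::int. (\<bar>of_int k\<bar> + 1) powr (- s)"
  have has_sum_shifted: "((\<lambda>n. (real n + c) powr (- s)) has_sum (\<Sum>n. (real n + c) powr (- s))) UNIV"
    if "1 \<le> c" for c
    using summable_shifted_powr[OF that assms]
    by (intro norm_summable_imp_has_sum) (auto simp: summable_sums)
  have "(?f has_sum ((\<Sum>n. (real n + 1) powr (- s)) + (\<Sum>n. (real n + 2) powr (- s)))) UNIV"
  proof (rule has_sum_int_split)
    show "((\<lambda>n. ?f (int n)) has_sum (\<Sum>n. (real n + 1) powr (- s))) UNIV"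
      using has_sum_shifted[of 1] by simp
    show "((\<lambda>n. ?f (- int n - 1)) has_sum (\<Sum>n. (real n + 2) powr (- s))) UNIV"
      using has_sum_shifted[of 2] by (simp add: add.commute)
  qed
  thus ?thesis
    by (rule has_sum_imp_summable)
qed

lemma norm_powr_le_exp_Im:
  fixes x w :: complex
  assumes "0 \<le> Re w" "cmod x \<le> c"
  shows "cmod (x powr w) \<le> c powr Re w * exp (\<bar>Im w\<bar> * pi)"
proof -
  have "cmod (x powr w) = cmod x powr Re w * exp (- Im w * Arg x)"
    by (rule norm_powr_complex)
  also have "\<dots> \<le> c powr Re w * exp (\<bar>Im w\<bar> * pi)"
  proof (rule mult_mono)
    show "cmod x powr Re w \<le> c powr Re w"
      using assms by (intro powr_mono2) auto
    have "\<bar>Arg x\<bar> \<le> pi"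
      using mpi_less_Arg[of x] Arg_le_pi[of x] by auto
    hence "\<bar>Im w * Arg x\<bar> \<le> \<bar>Im w\<bar> * pi"
      by (simp add: abs_mult mult_left_mono)
    thus "exp (- Im w * Arg x) \<le> exp (\<bar>Im w\<bar> * pi)"
      by simp
  qed auto
  finally show ?thesis .
qed

lemma norm_hatB_cplx_le:
  "0 \<le> Re w \<Longrightarrow> cmod (hatB_cplx w \<xi>) \<le> (4 / (\<bar>\<xi>\<bar> + 1)) powr Re w * exp (\<bar>Im w\<bar> * pi)"
  unfolding hatB_cplx_def by (rule norm_powr_le_exp_Im) (auto intro: norm_Xi_le)

lemma decay_shift_2pi_int_le:
  assumes "\<bar>\<xi>\<bar> \<le> T"
  shows "4 / (\<bar>\<xi> + 2 * pi * of_int k\<bar> + 1) \<le> 4 * (T + 1) / (\<bar>of_int k\<bar> + 1)"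
proof -
  let ?a = "\<bar>\<xi> + 2 * pi * of_int k\<bar>"
  have "\<bar>real_of_int k\<bar> \<le> \<bar>2 * pi * of_int k\<bar>"
    using pi_gt3 by (simp add: abs_mult mult_le_cancel_right1)
  hence "\<bar>real_of_int k\<bar> \<le> ?a + T"
    using assms by linarith
  moreover have "0 \<le> T * ?a"
    using assms by simp
  ultimately have k_le: "\<bar>real_of_int k\<bar> + 1 \<le> (T + 1) * (?a + 1)"
    by (simp add: algebra_simps)
  have "T + 1 \<noteq> 0"
    using assms by linarith
  hence "4 / (?a + 1) = 4 * (T + 1) / ((T + 1) * (?a + 1))"
    by (metis mult.commute mult_divide_mult_cancel_left)
  also have "\<dots> \<le> 4 * (T + 1) / (\<bar>of_int k\<bar> + 1)"
    using k_le assms by (intro divide_left_mono) auto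
  finally show ?thesis .
qed

lemma norm_hatB_cplx_shift_le:
  assumes "0 \<le> Re w" "\<bar>\<xi>\<bar> \<le> T"
  shows "cmod (hatB_cplx w (\<xi> + 2 * pi * of_int k)) \<le>
     (4 * (T + 1)) powr Re w * exp (\<bar>Im w\<bar> * pi) * (\<bar>of_int k\<bar> + 1) powr (- Re w)"
proof -
  have "cmod (hatB_cplx w (\<xi> + 2 * pi * of_int k))
      \<le> (4 * (T + 1) / (\<bar>of_int k\<bar> + 1)) powr Re w * exp (\<bar>Im w\<bar> * pi)"
    unfolding hatB_cplx_def
    by (rule norm_powr_le_exp_Im[OF assms(1) order.trans[OF norm_Xi_le decay_shift_2pi_int_le[OF assms(2)]]])
  also have "(4 * (T + 1) / (\<bar>of_int k\<bar> + 1)) powr Re w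
      = (4 * (T + 1)) powr Re w * (\<bar>of_int k\<bar> + 1) powr (- Re w)"
    using assms by (subst powr_divide) (auto simp: powr_minus divide_inverse)
  finally show ?thesis by (simp add: mult_ac)
qed

lemma summable_on_hatB_cplx_shift:
  assumes "1 < Re w"
  shows "(\<lambda>k::int. hatB_cplx w (\<xi> + 2 * pi * of_int k)) summable_on UNIV"
proof -
  let ?C = "(4 * (\<bar>\<xi>\<bar> + 1)) powr Re w * exp (\<bar>Im w\<bar> * pi)"
  have "(\<lambda>k::int. ?C * (\<bar>of_int k\<bar> + 1) powr (- Re w)) summable_on UNIV"
    by (intro summable_on_cmult_right summable_on_int_powr assms)
  hence "(\<lambda>k. norm (hatB_cplx w (\<xi> + 2 * pi * of_int k))) summable_on UNIV"
    by (rule Infinite_Sum.abs_summable_on_comparison_test')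
       (use norm_hatB_cplx_shift_le[of w \<xi> "\<bar>\<xi>\<bar>"] assms in auto)
  thus ?thesis by (rule abs_summable_summable)
qed

lemma continuous_on_hatB_cplx: "0 < Re w \<Longrightarrow> continuous_on UNIV (hatB_cplx w)"
  unfolding continuous_on_eq_continuous_at[OF open_UNIV] hatB_cplx_def
  by (auto intro!: continuous_powr_complex isCont_Xi dest: Xi_real_imp_nonneg)

lemma hatB_cplx_cnj: "hatB_cplx (cnj w) \<xi> = cnj (hatB_cplx w (- \<xi>))"
  unfolding hatB_cplx_def using Xi_real_imp_nonneg[of "- \<xi>"]
  by (subst cnj_powr) (auto simp: Xi_uminus)

section \<open>The periodization of \<open>B\<^sub>w\<close>\<close>

definition hatB_period_sum :: "complex \<Rightarrow> real \<Rightarrow> complex" where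
  "hatB_period_sum w \<xi> = (\<Sum>\<^sub>\<infinity>k\<in>(UNIV::int set). hatB_cplx w (\<xi> + 2 * pi * of_int k))"

lemma hatB_period_sum_sums:
  assumes "1 < Re w"
  shows "(\<lambda>n. hatB_cplx w (\<xi> + 2 * pi * of_int (int_decode n))) sums hatB_period_sum w \<xi>"
proof -
  have "((\<lambda>k::int. hatB_cplx w (\<xi> + 2 * pi * of_int k)) has_sum hatB_period_sum w \<xi>) UNIV"
    unfolding hatB_period_sum_def using summable_on_hatB_cplx_shift[OF assms]
    by (simp add: summable_iff_has_sum_infsum)
  hence "((\<lambda>n. hatB_cplx w (\<xi> + 2 * pi * of_int (int_decode n))) has_sum hatB_period_sum w \<xi>) UNIV"
    by (subst has_sum_reindex_bij_betw[OF bij_int_decode])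
  thus ?thesis
    by (rule has_sum_imp_sums)
qed

lemma continuous_on_hatB_period_sum:
  assumes "1 < Re w"
  shows "continuous_on UNIV (hatB_period_sum w)"
proof -
  \<comment> \<open>Enumerating \<open>\<int>\<close> by \<open>int_decode\<close> turns the sum into a series, so the Weierstrass M-test applies.\<close>
  let ?g = "\<lambda>n \<xi>. hatB_cplx w (\<xi> + 2 * pi * of_int (int_decode n))"
  have "continuous_on (ball 0 T) (hatB_period_sum w)" for T
  proof -
    let ?M = "\<lambda>k::int. (4 * (T + 1)) powr Re w * exp (\<bar>Im w\<bar> * pi) * (\<bar>of_int k\<bar> + 1) powr (- Re w)"
    have "?M summable_on UNIV"
      by (intro summable_on_cmult_right summable_on_int_powr assms)
    hence "(\<lambda>n. ?M (int_decode n)) summable_on UNIV"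
      using summable_on_reindex_bij_betw[OF bij_int_decode, of ?M] by simp
    hence "summable (\<lambda>n. ?M (int_decode n))"
      by (auto simp: summable_on_def sums_iff dest!: has_sum_imp_sums)
    hence "uniform_limit (ball 0 T) (\<lambda>n \<xi>. \<Sum>i<n. ?g i \<xi>) (\<lambda>\<xi>. \<Sum>i. ?g i \<xi>) sequentially"
      by (rule Weierstrass_m_test[rotated]) (rule norm_hatB_cplx_shift_le, use assms in auto)
    moreover have "continuous_on (ball 0 T) (?g i)" for i
      using assms by (auto intro!: continuous_on_compose2[OF continuous_on_hatB_cplx] continuous_intros)
    ultimately have "continuous_on (ball 0 T) (\<lambda>\<xi>. \<Sum>i. ?g i \<xi>)"
      by (intro uniform_limit_theorem) (auto intro!: always_eventually continuous_on_sum)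
    thus ?thesis
      using hatB_period_sum_sums[OF assms] by (simp add: sums_iff)
  qed
  hence "isCont (hatB_period_sum w) x" for x
    using continuous_on_interior[of "ball 0 (\<bar>x\<bar> + 1)" _ x] by force
  thus ?thesis
    by (simp add: continuous_on_eq_continuous_at)
qed

lemma hatB_period_sum_periodic: "hatB_period_sum w (\<xi> + 2 * pi * of_int n) = hatB_period_sum w \<xi>"
  unfolding hatB_period_sum_def
  by (rule infsum_reindex_bij_witness[of UNIV "\<lambda>k. k - n" "\<lambda>k. k + n"]) (auto simp: algebra_simps)

lemma hatB_period_sum_0: "hatB_period_sum w 0 = 1"
proof -
  have "hatB_period_sum w 0 = (\<Sum>\<^sub>\<infinity>k\<in>{0::int}. hatB_cplx w (0 + 2 * pi * of_int k))"
    unfolding hatB_period_sum_def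
    by (rule infsum_cong_neutral) (auto simp: hatB_cplx_def Xi_2pi_int)
  thus ?thesis
    by (simp add: hatB_cplx_def)
qed

lemma hatB_period_sum_cnj: "hatB_period_sum (cnj w) \<xi> = cnj (hatB_period_sum w (- \<xi>))"
  unfolding hatB_period_sum_def infsum_cnj[symmetric]
  by (rule infsum_reindex_bij_witness[of UNIV uminus uminus]) (auto simp: hatB_cplx_cnj algebra_simps)

lemma periodic_reduce:
  fixes f :: "real \<Rightarrow> 'a"
  assumes "0 < p" "\<And>x n. f (x + p * of_int n) = f x"
  obtains y where "0 \<le> y" "y < p" "f x = f y"
proof
  let ?n = "\<lfloor>x / p\<rfloor>"
  show "0 \<le> x - p * of_int ?n" "x - p * of_int ?n < p"
    using floor_divide_lower[OF assms(1), of x] floor_divide_upper[OF assms(1), of x]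
    by (simp_all add: algebra_simps)
  show "f x = f (x - p * of_int ?n)"
    using assms(2)[of "x - p * of_int ?n" ?n] by simp
qed

lemma hatB_cplx_eq_scaled:
  assumes "0 < r" "Xi x = of_real (inverse r) * V"
  shows "hatB_cplx w x = of_real (2 * pi) powr (- w) * of_real (r / (2 * pi)) powr (- w) * V powr w"
proof -
  have "Ln (inverse (complex_of_real r)) = - Ln (complex_of_real r)"
    using assms(1) by (intro Ln_inverse) (auto simp: complex_nonpos_Reals_iff)
  hence "of_real (inverse r) powr w = complex_of_real r powr (- w)"
    using assms(1) by (simp add: powr_def Ln_of_real)
  also have "complex_of_real r = of_real (2 * pi) * of_real (r / (2 * pi))"
    by simp
  also have "\<dots> powr (- w) = of_real (2 * pi) powr (- w) * of_real (r / (2 * pi)) powr (- w)"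
    by (rule powr_times_real_left) auto
  finally have "of_real (inverse r) powr w = of_real (2 * pi) powr (- w) * of_real (r / (2 * pi)) powr (- w)" .
  moreover have "hatB_cplx w x = of_real (inverse r) powr w * V powr w"
    unfolding hatB_cplx_def assms(2) using assms(1) by (intro powr_times_real_left) auto
  ultimately show ?thesis
    by simp
qed

lemma hatB_cplx_shift_nonneg:
  assumes "0 < \<xi>"
  shows "hatB_cplx w (\<xi> + 2 * pi * of_int (int n)) =
     of_real (2 * pi) powr (- w) * of_real (\<xi> / (2 * pi) + real n) powr (- w) * Xi_numer \<xi> powr w"
proof -
  let ?r = "\<xi> + 2 * pi * real n"
  have r: "0 < ?r"
    using assms by (simp add: add_pos_nonneg)
  have "Xi (\<xi> + 2 * pi * of_int (int n)) = of_real (inverse ?r) * Xi_numer \<xi>"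
    using r Xi_shift_2pi_int[of \<xi> "int n"] by simp
  from hatB_cplx_eq_scaled[OF r this] show ?thesis
    by (simp add: field_simps)
qed

lemma hatB_cplx_shift_neg:
  assumes "0 < \<xi>" "\<xi> < 2 * pi"
  shows "hatB_cplx w (\<xi> + 2 * pi * of_int (- int n - 1)) =
     of_real (2 * pi) powr (- w) * of_real (1 - \<xi> / (2 * pi) + real n) powr (- w)
       * (exp (\<i> * pi * w) * Xi_numer \<xi> powr w)"
proof -
  let ?r = "2 * pi * (real n + 1) - \<xi>"
  have "2 * pi * 1 \<le> 2 * pi * (real n + 1)"
    by (intro mult_left_mono) auto
  hence r: "0 < ?r"
    using assms by linarith
  have shift: "\<xi> + 2 * pi * of_int (- int n - 1) = - ?r"
    by (simp add: algebra_simps)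
  have "Xi (\<xi> + 2 * pi * of_int (- int n - 1)) = of_real (inverse (- ?r)) * Xi_numer \<xi>"
    using r Xi_shift_2pi_int[of \<xi> "- int n - 1"] unfolding shift by simp
  also have "of_real (inverse (- ?r)) * Xi_numer \<xi> = of_real (inverse ?r) * (- Xi_numer \<xi>)"
    by (simp only: inverse_minus_eq of_real_minus mult_minus_left mult_minus_right)
  finally have "Xi (\<xi> + 2 * pi * of_int (- int n - 1)) = of_real (inverse ?r) * (- Xi_numer \<xi>)" .
  from hatB_cplx_eq_scaled[OF r this]
  have "hatB_cplx w (\<xi> + 2 * pi * of_int (- int n - 1))
      = of_real (2 * pi) powr (- w) * of_real (1 - \<xi> / (2 * pi) + real n) powr (- w) * (- Xi_numer \<xi>) powr w"
    by (simp add: field_simps)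
  \<comment> \<open>\<open>Xi_numer \<xi>\<close> lies in the lower half-plane, so \<open>Ln (- Xi_numer \<xi>) = Ln (Xi_numer \<xi>) + i\<pi>\<close>.\<close>
  moreover have "Im (Xi_numer \<xi>) < 0"
    using Im_Xi_numer_neg assms by blast
  hence "(- Xi_numer \<xi>) powr w = exp (\<i> * pi * w) * Xi_numer \<xi> powr w"
    by (auto simp: powr_def Ln_minus exp_add[symmetric] algebra_simps)
  ultimately show ?thesis
    by simp
qed

lemma hurwitz_zeta_has_sum:
  assumes "0 < a" "1 < Re s"
  shows "((\<lambda>k. complex_of_real (a + real k) powr (- s)) has_sum hurwitz_zeta s a) UNIV"
proof -
  have "summable (\<lambda>k. (a + real (Suc k)) powr (- Re s))"
    by (rule summable_comparison_test'[OF summable_shifted_powr[of 1 "Re s"], where N=0])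
       (use assms in \<open>auto intro!: powr_mono2'\<close>)
  hence "summable (\<lambda>k. (a + real k) powr (- Re s))"
    by (subst (asm) summable_Suc_iff)
  moreover have "norm (complex_of_real (a + real k) powr (- s)) = (a + real k) powr (- Re s)" for k
    using assms by (subst norm_powr_real_powr) auto
  ultimately have "summable (\<lambda>k. norm (complex_of_real (a + real k) powr (- s)))"
    by simp
  thus ?thesis
    unfolding hurwitz_zeta_def
    by (intro norm_summable_imp_has_sum) (auto simp: summable_sums summable_norm_cancel)
qed

lemma cnj_hurwitz_zeta:
  assumes "0 < a" "1 < Re s"
  shows "cnj (hurwitz_zeta s a) = hurwitz_zeta (cnj s) a"
proof -
  have "(\<lambda>k. cnj (complex_of_real (a + real k) powr (- s))) sums cnj (hurwitz_zeta s a)"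
    using has_sum_imp_sums[OF hurwitz_zeta_has_sum[OF assms]] by (subst sums_cnj)
  moreover have "cnj (complex_of_real (a + real k) powr (- s)) = complex_of_real (a + real k) powr (- cnj s)" for k
    using assms by (subst cnj_powr) auto
  ultimately show ?thesis
    unfolding hurwitz_zeta_def[of "cnj s"] by (simp add: sums_iff)
qed

lemma hatB_period_sum_hurwitz:
  assumes "1 < Re w" "0 < \<xi>" "\<xi> < 2 * pi"
  shows "hatB_period_sum w \<xi> = of_real (2 * pi) powr (- w) * Xi_numer \<xi> powr w *
     (hurwitz_zeta w (\<xi> / (2 * pi)) + exp (\<i> * pi * w) * hurwitz_zeta w (1 - \<xi> / (2 * pi)))"
proof -
  let ?C = "of_real (2 * pi) powr (- w) * Xi_numer \<xi> powr w"
  have "((\<lambda>k. hatB_cplx w (\<xi> + 2 * pi * of_int k)) has_sum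
      (?C * hurwitz_zeta w (\<xi> / (2 * pi)) + ?C * exp (\<i> * pi * w) * hurwitz_zeta w (1 - \<xi> / (2 * pi)))) UNIV"
  proof (rule has_sum_int_split)
    have "((\<lambda>n. ?C * complex_of_real (\<xi> / (2 * pi) + real n) powr (- w)) has_sum
        (?C * hurwitz_zeta w (\<xi> / (2 * pi)))) UNIV"
      using assms by (intro has_sum_cmult_right hurwitz_zeta_has_sum) auto
    thus "((\<lambda>n. hatB_cplx w (\<xi> + 2 * pi * of_int (int n))) has_sum (?C * hurwitz_zeta w (\<xi> / (2 * pi)))) UNIV"
      using hatB_cplx_shift_nonneg[OF assms(2)] by (simp add: mult_ac)
    have "((\<lambda>n. ?C * exp (\<i> * pi * w) * complex_of_real (1 - \<xi> / (2 * pi) + real n) powr (- w)) has_sum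
        (?C * exp (\<i> * pi * w) * hurwitz_zeta w (1 - \<xi> / (2 * pi)))) UNIV"
      using assms by (intro has_sum_cmult_right hurwitz_zeta_has_sum) (auto simp: field_simps)
    thus "((\<lambda>n. hatB_cplx w (\<xi> + 2 * pi * of_int (- int n - 1))) has_sum
        (?C * exp (\<i> * pi * w) * hurwitz_zeta w (1 - \<xi> / (2 * pi)))) UNIV"
      using hatB_cplx_shift_neg[OF assms(2,3)] by (simp add: mult_ac)
  qed
  thus ?thesis
    unfolding hatB_period_sum_def by (simp add: infsumI distrib_left mult_ac)
qed

lemma hatB_period_sum_nonzero:
  assumes "1 < Re w"
    and "\<forall>\<alpha>\<in>{0<..<1}. hurwitz_zeta w \<alpha> + exp (\<i> * pi * w) * hurwitz_zeta w (1 - \<alpha>) \<noteq> 0"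
  shows "hatB_period_sum w \<xi> \<noteq> 0"
proof -
  obtain \<eta> where \<eta>: "0 \<le> \<eta>" "\<eta> < 2 * pi" "hatB_period_sum w \<xi> = hatB_period_sum w \<eta>"
    using periodic_reduce[of "2 * pi" "hatB_period_sum w"] hatB_period_sum_periodic by auto
  show ?thesis
  proof (cases "\<eta> = 0")
    case True
    thus ?thesis using \<eta> by (simp add: hatB_period_sum_0)
  next
    case False
    hence "\<eta> / (2 * pi) \<in> {0<..<1}"
      using \<eta> by (simp add: field_simps)
    moreover have "Xi_numer \<eta> \<noteq> 0"
      using Im_Xi_numer_neg[of \<eta>] False \<eta> by auto
    ultimately show ?thesis
      using hatB_period_sum_hurwitz[OF assms(1), of \<eta>] assms(2) False \<eta> by (simp add: powr_def)
  qed
qed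

lemma hatB_period_sum_bounded_below:
  assumes "1 < Re w" "\<And>\<xi>. hatB_period_sum w \<xi> \<noteq> 0"
  obtains m where "0 < m" "\<And>\<xi>. m \<le> cmod (hatB_period_sum w \<xi>)"
proof -
  have "continuous_on {0..2 * pi} (\<lambda>\<xi>. cmod (hatB_period_sum w \<xi>))"
    using continuous_on_hatB_period_sum[OF assms(1)]
    by (intro continuous_intros) (auto intro: continuous_on_subset)
  then obtain x0 where "\<forall>y\<in>{0..2 * pi}. cmod (hatB_period_sum w x0) \<le> cmod (hatB_period_sum w y)"
    using continuous_attains_inf[of "{0..2 * pi}"] by auto
  moreover have "\<exists>y\<in>{0..2 * pi}. hatB_period_sum w \<xi> = hatB_period_sum w y" for \<xi>
    using periodic_reduce[of "2 * pi" "hatB_period_sum w"] hatB_period_sum_periodic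
    by (metis atLeastAtMost_iff less_eq_real_def pi_gt_zero zero_less_mult_iff zero_less_numeral)
  ultimately have "cmod (hatB_period_sum w x0) \<le> cmod (hatB_period_sum w \<xi>)" for \<xi>
    by metis
  moreover have "0 < cmod (hatB_period_sum w x0)"
    using assms(2) by simp
  ultimately show ?thesis
    using that by blast
qed

section \<open>The integrand of the complex cardinal spline\<close>

definition L_integrand :: "complex \<Rightarrow> real \<Rightarrow> real \<Rightarrow> complex" where
  "L_integrand w t \<xi> =
     exp (\<i> * of_real (\<xi> * t)) / (2 * of_real pi) * (hatB_cplx w \<xi> * inverse (hatB_period_sum w \<xi>))"

lemma L_cplx_eq_integral: "L_cplx w t = (LINT \<xi>|lborel. L_integrand w t \<xi>)"
proof -
  have "a / b * (c * inverse d) = 1 / b * (c / d * a)" for a b c d :: complex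
    by (simp add: divide_inverse mult_ac)
  hence "L_integrand w t = (\<lambda>\<xi>. 1 / (2 * of_real pi) *
      (hatB_cplx w \<xi> / hatB_period_sum w \<xi> * exp (\<i> * of_real (\<xi> * t))))"
    unfolding L_integrand_def by presburger
  thus ?thesis
    unfolding L_cplx_def hatB_period_sum_def[symmetric] by (simp only: integral_mult_right_zero)
qed

lemma L_integrand_cnj: "L_integrand (cnj w) t \<xi> = cnj (L_integrand w t (- \<xi>))"
proof -
  have "cnj (exp (\<i> * of_real (- \<xi> * t))) = exp (\<i> * of_real (\<xi> * t))"
    by (simp add: exp_cnj)
  thus ?thesis
    unfolding L_integrand_def hatB_cplx_cnj hatB_period_sum_cnj
    by (simp only: complex_cnj_mult complex_cnj_divide complex_cnj_inverse complex_cnj_numeral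
        complex_cnj_complex_of_real minus_minus)
qed

lemma integral_L_integrand_cnj:
  "(LINT \<xi>|lborel. L_integrand (cnj w) t \<xi>) = cnj (LINT \<xi>|lborel. L_integrand w t \<xi>)"
proof -
  have "(LINT \<xi>|lborel. L_integrand w t \<xi>) = \<bar>- 1\<bar> *\<^sub>R (LINT \<xi>|lborel. L_integrand w t (0 + - 1 * \<xi>))"
    by (rule lborel_integral_real_affine) simp
  thus ?thesis
    by (simp add: L_integrand_cnj)
qed

lemma integrable_abs_plus_one_powr:
  fixes s :: real
  assumes "1 < s"
  shows "integrable lborel (\<lambda>x::real. (\<bar>x\<bar> + 1) powr (- s))"
proof -
  define f where "f = (\<lambda>x::real. indicator {1..} x *\<^sub>R x powr (- s))"
  have "((\<lambda>x. x powr (- s)) has_integral - (1 powr (- s + 1)) / (- s + 1)) {1..}"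
    using assms by (intro has_integral_powr_to_inf) auto
  hence "(\<lambda>x::real. x powr (- s)) absolutely_integrable_on {1..}"
    by (intro nonnegative_absolutely_integrable_1 has_integral_integrable) simp_all
  hence "integrable lebesgue f"
    by (simp add: set_integrable_def f_def)
  moreover have "f \<in> borel_measurable lborel"
    unfolding f_def by measurable
  ultimately have "integrable lborel f"
    by (simp add: integrable_completion)
  hence "integrable lborel (\<lambda>x. f (1 + 1 * x) + f (1 + (-1) * x))"
    by (intro Bochner_Integration.integrable_add lborel_integrable_real_affine) simp_all
  thus ?thesis
  proof (rule Bochner_Integration.integrable_bound)
    show "(\<lambda>x::real. (\<bar>x\<bar> + 1) powr (- s)) \<in> borel_measurable lborel"
      by measurable
    have "\<bar>(\<bar>x\<bar> + 1) powr (- s)\<bar> \<le> \<bar>f (1 + 1 * x) + f (1 + (-1) * x)\<bar>" for x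
      by (cases "0 \<le> x") (simp_all add: f_def add.commute add_nonneg_nonneg)
    thus "AE x in lborel. norm ((\<bar>x\<bar> + 1) powr (- s)) \<le> norm (f (1 + 1 * x) + f (1 + (-1) * x))"
      by simp
  qed
qed

lemma integrable_L_integrand:
  assumes "1 < Re w" "\<And>\<xi>. hatB_period_sum w \<xi> \<noteq> 0"
  shows "integrable lborel (L_integrand w t)"
proof -
  obtain m where m: "0 < m" "\<And>\<xi>. m \<le> cmod (hatB_period_sum w \<xi>)"
    using hatB_period_sum_bounded_below[OF assms] by blast
  define K where "K = 4 powr Re w * exp (\<bar>Im w\<bar> * pi) / (2 * pi * m)"
  have "integrable lborel (\<lambda>\<xi>. K * (\<bar>\<xi>\<bar> + 1) powr (- Re w))"
    using integrable_abs_plus_one_powr assms(1) by simp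
  thus ?thesis
  proof (rule Bochner_Integration.integrable_bound)
    have "continuous_on UNIV (L_integrand w t)"
      unfolding L_integrand_def[abs_def] using assms
      by (intro continuous_intros continuous_on_hatB_cplx continuous_on_hatB_period_sum) auto
    thus "L_integrand w t \<in> borel_measurable lborel"
      by (simp add: borel_measurable_continuous_onI)
    have "cmod (L_integrand w t \<xi>) \<le> K * (\<bar>\<xi>\<bar> + 1) powr (- Re w)" for \<xi>
    proof -
      have "cmod (L_integrand w t \<xi>) = cmod (hatB_cplx w \<xi>) * inverse (cmod (hatB_period_sum w \<xi>)) / (2 * pi)"
        by (simp add: L_integrand_def norm_mult norm_divide norm_inverse)
      also have "\<dots> \<le> ((4 / (\<bar>\<xi>\<bar> + 1)) powr Re w * exp (\<bar>Im w\<bar> * pi)) * inverse m / (2 * pi)"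
        using assms(1) m by (intro divide_right_mono mult_mono norm_hatB_cplx_le le_imp_inverse_le) auto
      also have "\<dots> = K * (\<bar>\<xi>\<bar> + 1) powr (- Re w)"
        using m by (simp add: K_def powr_divide powr_minus_divide field_simps)
      finally show ?thesis .
    qed
    moreover have "0 \<le> K"
      using m by (simp add: K_def)
    ultimately show "AE \<xi> in lborel. norm (L_integrand w t \<xi>) \<le> norm (K * (\<bar>\<xi>\<bar> + 1) powr (- Re w))"
      by simp
  qed
qed

section \<open>Complex quaternions in the plane of a unit vector\<close>

text \<open>For a unit vector \<open>u = u\<^sub>1 e\<^sub>1 + u\<^sub>2 e\<^sub>2 + u\<^sub>3 e\<^sub>3\<close> this is \<open>a (1 - i u)/2 + b (1 + i u)/2\<close>; the two
  coefficients are orthogonal idempotents because \<open>u\<^sup>2 = -1\<close>.\<close>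

definition cq_pair :: "real \<Rightarrow> real \<Rightarrow> real \<Rightarrow> complex \<Rightarrow> complex \<Rightarrow> cquat" where
  "cq_pair u1 u2 u3 a b = CQuat ((a + b) / 2)
     (of_real u1 * (\<i> * (b - a) / 2)) (of_real u2 * (\<i> * (b - a) / 2)) (of_real u3 * (\<i> * (b - a) / 2))"

lemma unit_of_real_sum_squares:
  "u1\<^sup>2 + u2\<^sup>2 + u3\<^sup>2 = 1 \<Longrightarrow> (complex_of_real u1)\<^sup>2 + (of_real u2)\<^sup>2 + (of_real u3)\<^sup>2 = 1"
  by (simp flip: of_real_power of_real_add)

lemma cq_mult_cq_pair:
  assumes "u1\<^sup>2 + u2\<^sup>2 + u3\<^sup>2 = 1"
  shows "cq_mult (cq_pair u1 u2 u3 a b) (cq_pair u1 u2 u3 c d) = cq_pair u1 u2 u3 (a * c) (b * d)"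
  using unit_of_real_sum_squares[OF assms] complex_i_mult_minus[of 1]
  unfolding cq_mult_def cq_pair_def cquat.sel cquat.inject
  by (intro conjI; simp add: field_simps; algebra)

lemma cq_inverse_cq_pair:
  assumes "u1\<^sup>2 + u2\<^sup>2 + u3\<^sup>2 = 1" "a \<noteq> 0" "b \<noteq> 0"
  shows "cq_inverse (cq_pair u1 u2 u3 a b) = cq_pair u1 u2 u3 (inverse a) (inverse b)"
proof -
  have "((a + b) / 2)\<^sup>2 + (of_real u1 * (\<i> * (b - a) / 2))\<^sup>2 + (of_real u2 * (\<i> * (b - a) / 2))\<^sup>2
      + (of_real u3 * (\<i> * (b - a) / 2))\<^sup>2 = a * b" (is "?N = _")
  proof -
    have "?N = ((a + b) / 2)\<^sup>2 + ((of_real u1)\<^sup>2 + (of_real u2)\<^sup>2 + (of_real u3)\<^sup>2) * (\<i> * (b - a) / 2)\<^sup>2"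
      by (simp only: power_mult_distrib distrib_right add.assoc)
    also have "\<dots> = a * b"
      using unit_of_real_sum_squares[OF assms(1)] by (simp add: power2_eq_square field_simps)
    finally show ?thesis .
  qed
  thus ?thesis
    using assms(2,3) unfolding cq_inverse_def cq_pair_def Let_def cquat.sel cquat.inject
    by (intro conjI; simp add: field_simps)
qed

lemma cq_scale_cq_pair: "cq_scale c (cq_pair u1 u2 u3 a b) = cq_pair u1 u2 u3 (c * a) (c * b)"
  by (simp add: cq_scale_def cq_pair_def algebra_simps)

lemma cq_infsum_int_cq_pair:
  assumes "f summable_on UNIV" "g summable_on UNIV"
  shows "cq_infsum_int (\<lambda>k. cq_pair u1 u2 u3 (f k) (g k)) = cq_pair u1 u2 u3 (infsum f UNIV) (infsum g UNIV)"
  unfolding cq_infsum_int_def cq_pair_def cquat.sel divide_inverse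
  by (simp only: infsum_cmult_left' infsum_cmult_right' infsum_add[OF assms] infsum_diff[OF assms(2,1)])

lemma cq_integral_cq_pair:
  assumes "integrable lborel f" "integrable lborel g"
  shows "cq_integral (\<lambda>x. cq_pair u1 u2 u3 (f x) (g x))
      = cq_pair u1 u2 u3 (LINT x|lborel. f x) (LINT x|lborel. g x)"
  unfolding cq_integral_def cq_pair_def cquat.sel divide_inverse
  by (simp only: integral_mult_right_zero integral_mult_left_zero
      Bochner_Integration.integral_add[OF assms] Bochner_Integration.integral_diff[OF assms(2,1)])

lemma cq_pair_cnj:
  "cq_pair u1 u2 u3 a (cnj a) = CQuat (of_real (Re a))
     (of_real (u1 * Im a)) (of_real (u2 * Im a)) (of_real (u3 * Im a))"
  by (simp add: cq_pair_def complex_eq_iff)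

lemma qpow_eq_cq_pair:
  assumes "vnorm q \<noteq> 0"
  shows "qpow \<zeta> q = cq_pair (rq1 q / vnorm q) (rq2 q / vnorm q) (rq3 q / vnorm q)
      (\<zeta> powr Complex (rq0 q) (vnorm q)) (\<zeta> powr cnj (Complex (rq0 q) (vnorm q)))"
proof (cases "\<zeta> = 0")
  case True
  thus ?thesis by (simp add: qpow_def cq_pair_def)
next
  case False
  define A where "A = \<zeta> powr complex_of_real (rq0 q)"
  define L where "L = complex_of_real (vnorm q) * Ln \<zeta>"
  have powr_z: "\<zeta> powr Complex (rq0 q) (vnorm q) = A * exp (\<i> * L)"
    using False by (simp add: powr_def A_def L_def Complex_eq algebra_simps exp_add[symmetric])
  have powr_cnj_z: "\<zeta> powr cnj (Complex (rq0 q) (vnorm q)) = A * exp (- (\<i> * L))"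
    using False by (simp add: powr_def A_def L_def Complex_eq algebra_simps exp_add[symmetric])
  have "qpow \<zeta> q = CQuat (A * cos L) (A * of_real (rq1 q / vnorm q) * sin L)
      (A * of_real (rq2 q / vnorm q) * sin L) (A * of_real (rq3 q / vnorm q) * sin L)"
    using False unfolding qpow_def Let_def A_def L_def by simp
  thus ?thesis
    unfolding cq_pair_def powr_z powr_cnj_z exp_Euler exp_minus_Euler by (simp add: algebra_simps)
qed

lemma L_cplx_cnj: "L_cplx (cnj w) t = cnj (L_cplx w t)"
  by (simp add: L_cplx_eq_integral integral_L_integrand_cnj)

lemma L_quat_eq_cq_pair:
  fixes q :: rquat
  defines "z \<equiv> Complex (rq0 q) (vnorm q)"
    and "P \<equiv> cq_pair (rq1 q / vnorm q) (rq2 q / vnorm q) (rq3 q / vnorm q)"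
  assumes unit: "(rq1 q / vnorm q)\<^sup>2 + (rq2 q / vnorm q)\<^sup>2 + (rq3 q / vnorm q)\<^sup>2 = 1"
    and z: "1 < Re z" "\<And>\<xi>. hatB_period_sum z \<xi> \<noteq> 0"
  shows "L_quat q t = P (L_cplx z t) (cnj (L_cplx z t))"
proof -
  have "vnorm q \<noteq> 0"
    using unit by auto
  hence hatB: "hatB_quat q \<xi> = P (hatB_cplx z \<xi>) (hatB_cplx (cnj z) \<xi>)" for \<xi>
    unfolding hatB_quat_def hatB_cplx_def P_def z_def by (rule qpow_eq_cq_pair)
  have cnj_z: "1 < Re (cnj z)" "hatB_period_sum (cnj z) \<xi> \<noteq> 0" for \<xi>
    using z by (simp_all add: hatB_period_sum_cnj)
  have "cq_infsum_int (\<lambda>k. hatB_quat q (\<xi> + 2 * pi * of_int k))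
      = P (hatB_period_sum z \<xi>) (hatB_period_sum (cnj z) \<xi>)" for \<xi>
    unfolding hatB hatB_period_sum_def P_def
    by (intro cq_infsum_int_cq_pair summable_on_hatB_cplx_shift z cnj_z)
  hence "L_quat q t = cq_integral (\<lambda>\<xi>. P (L_integrand z t \<xi>) (L_integrand (cnj z) t \<xi>))"
    unfolding L_quat_def hatB P_def L_integrand_def
    by (simp only: cq_inverse_cq_pair[OF unit] cq_mult_cq_pair[OF unit] cq_scale_cq_pair z cnj_z not_False_eq_True)
  also have "\<dots> = P (L_cplx z t) (L_cplx (cnj z) t)"
    unfolding P_def L_cplx_eq_integral
    by (intro cq_integral_cq_pair integrable_L_integrand z cnj_z)
  finally show ?thesis
    by (simp only: L_cplx_cnj)
qed

lemma Q_set_unit_vector: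
  assumes "q \<in> Q_set R"
  shows "(rq1 q / vnorm q)\<^sup>2 + (rq2 q / vnorm q)\<^sup>2 + (rq3 q / vnorm q)\<^sup>2 = 1"
proof -
  have "0 < rq1 q ^ 2 + rq2 q ^ 2 + rq3 q ^ 2"
    using assms by (auto simp: Q_set_def add_pos_nonneg add_nonneg_pos)
  thus ?thesis
    by (simp add: vnorm_def power_divide add_divide_distrib[symmetric])
qed

lemma admissible_R_hatB_period_sum_nonzero:
  assumes "admissible_R R" "w \<in> R"
  shows "1 < Re w" "hatB_period_sum w \<xi> \<noteq> 0"
proof -
  show w: "1 < Re w"
    using assms unfolding admissible_R_def by auto
  have "cnj w \<in> R"
    using assms unfolding admissible_R_def by (metis image_eqI complex_cnj_cnj)
  hence "hurwitz_zeta (cnj w) \<alpha> + exp (- \<i> * of_real pi * cnj w) * hurwitz_zeta (cnj w) (1 - \<alpha>) \<noteq> 0"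
    if "\<alpha> \<in> {0<..<1}" for \<alpha>
    using assms(1) that unfolding admissible_R_def by blast
  moreover have "cnj (hurwitz_zeta (cnj w) \<alpha> + exp (- \<i> * of_real pi * cnj w) * hurwitz_zeta (cnj w) (1 - \<alpha>))
      = hurwitz_zeta w \<alpha> + exp (\<i> * pi * w) * hurwitz_zeta w (1 - \<alpha>)" if "\<alpha> \<in> {0<..<1}" for \<alpha>
    using that w by (simp add: exp_cnj cnj_hurwitz_zeta[symmetric])
  ultimately show "hatB_period_sum w \<xi> \<noteq> 0"
    by (intro hatB_period_sum_nonzero w) (metis complex_cnj_zero_iff)
qed

theorem corollary1:
  fixes R :: "complex set" and q :: rquat and z :: complex
  assumes "admissible_R R"
    and "q \<in> Q_set R"
    and "z = Complex (rq0 q) (vnorm q)"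
  shows "\<forall>t::real. L_quat q t =
           CQuat (complex_of_real (Re (L_cplx z t)))
                 (complex_of_real (rq1 q / vnorm q * Im (L_cplx z t)))
                 (complex_of_real (rq2 q / vnorm q * Im (L_cplx z t)))
                 (complex_of_real (rq3 q / vnorm q * Im (L_cplx z t)))"
proof -
  have "z \<in> R"
    using assms(2,3) by (simp add: Q_set_def)
  with assms(1) have "1 < Re z" "hatB_period_sum z \<xi> \<noteq> 0" for \<xi>
    by (rule admissible_R_hatB_period_sum_nonzero)+
  with L_quat_eq_cq_pair[OF Q_set_unit_vector[OF assms(2)]]
  have "L_quat q t = cq_pair (rq1 q / vnorm q) (rq2 q / vnorm q) (rq3 q / vnorm q) (L_cplx z t) (cnj (L_cplx z t))"
    for t
    unfolding assms(3) by blast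
  thus ?thesis
    by (simp only: cq_pair_cnj simp_thms)
qed

end
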